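(* Let $G=(V,E)$ be a finite graph and let $\xi$ be an integer-valued random variable such that the random permutation has cycle length bounded by $\xi$ on $(V,E)$. Let $(\xi_n)_{n\in\mathbb N}$ be independent copies of $\xi$. Then for each $A \subset V$ and each $\ell \in \mathbb N$, $$\mathbb P_V(|\mathrm{Or}(A)| \geq \ell) \leq \mathbb P\Big(\sum_{i=1}^{|A|} \xi_i \geq \ell\Big).$$
   Context: For $U\subset V$, $\mathcal S_U$ is the set of bijections $\pi:U\to U$ with $\pi(x)=x$ or $\{x,\pi(x)\}\in E$; $\mathbb P_U(\pi)=e^{-\alpha\sum_{x\in U}\mathbb 1\{\pi(x)\neq x\}}/Z(U)$. $\gamma_x$ is the cycle of $\pi$ containing $x$ and $|\gamma_x|$ its number of vertices. The random permutation has cycle length bounded by $\xi$ on $(V,E)$ if for all $\ell\ge1$, $\sup_{U\subset V\text{ finite}}\sup_{x\in U}\mathbb P_U(|\gamma_x|\ge\ell)\le\mathbb P(\xi\ge\ell)$. $\mathrm{Or}(A)=\mathrm{Or}_\pi(A)=\{\pi^j(x):x\in A,j\in\mathbb N\}$. *)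

theory Defs
  imports "HOL-Probability.Probability" "HOL-Combinatorics.Permutations"
begin

definition adm_perms :: "'a set set \<Rightarrow> 'a set \<Rightarrow> ('a \<Rightarrow> 'a) set" where
  "adm_perms E U = {\<pi>. \<pi> permutes U \<and> (\<forall>x\<in>U. \<pi> x = x \<or> {x, \<pi> x} \<in> E)}"

definition perm_weight :: "real \<Rightarrow> 'a set \<Rightarrow> ('a \<Rightarrow> 'a) \<Rightarrow> real" where
  "perm_weight \<alpha> U \<pi> = exp (- \<alpha> * real (card {x\<in>U. \<pi> x \<noteq> x}))"

definition part_fun :: "real \<Rightarrow> 'a set set \<Rightarrow> 'a set \<Rightarrow> real" where
  "part_fun \<alpha> E U = (\<Sum>\<pi>\<in>adm_perms E U. perm_weight \<alpha> U \<pi>)"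

definition perm_prob :: "real \<Rightarrow> 'a set set \<Rightarrow> 'a set \<Rightarrow> (('a \<Rightarrow> 'a) \<Rightarrow> bool) \<Rightarrow> real" where
  "perm_prob \<alpha> E U Q =
     (\<Sum>\<pi>\<in>{\<pi>\<in>adm_perms E U. Q \<pi>}. perm_weight \<alpha> U \<pi>) / part_fun \<alpha> E U"

definition cycle_of :: "('a \<Rightarrow> 'a) \<Rightarrow> 'a \<Rightarrow> 'a set" where
  "cycle_of \<pi> x = {(\<pi> ^^ j) x | j. True}"

definition Or :: "('a \<Rightarrow> 'a) \<Rightarrow> 'a set \<Rightarrow> 'a set" where
  "Or \<pi> A = {(\<pi> ^^ j) x | x j. x \<in> A}"

definition cycle_length_bounded :: "real \<Rightarrow> 'a set \<Rightarrow> 'a set set \<Rightarrow> int pmf \<Rightarrow> bool" where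
  "cycle_length_bounded \<alpha> V E \<xi> \<longleftrightarrow>
     (\<forall>l::nat. l \<ge> 1 \<longrightarrow>
        (\<forall>U. U \<subseteq> V \<longrightarrow> finite U \<longrightarrow>
          (\<forall>x\<in>U. perm_prob \<alpha> E U (\<lambda>\<pi>. card (cycle_of \<pi> x) \<ge> l)
                   \<le> measure_pmf.prob \<xi> {k. k \<ge> int l})))"

text \<open>Law of xi_1 + ... + xi_n for independent copies xi_i of xi.\<close>
fun iid_sum :: "int pmf \<Rightarrow> nat \<Rightarrow> int pmf" where
  "iid_sum \<xi> 0 = return_pmf 0"
| "iid_sum \<xi> (Suc n) = bind_pmf \<xi> (\<lambda>a. map_pmf (\<lambda>s. a + s) (iid_sum \<xi> n))"

end

theory Submission
  imports Defs
begin

text \<open>Pick x \<in> A and condition on the cycle C of x. Gluing a permutation of C with a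
  permutation of U - C is a weight-preserving bijection, so given C the remaining permutation
  is distributed according to P_{U-C}; moreover Or(A) is the disjoint union of C and the orbit
  of A - C under that remaining permutation. By induction on |A| the conditional probability
  of |Or(A)| \<ge> l is therefore at most h(|C|) := P(\<xi>_1 + ... + \<xi>_{|A|-1} \<ge> l - |C|). Since h
  is nondecreasing and |C| is stochastically dominated by \<xi>, a layer-cake (summation by parts)
  argument bounds the expectation of h(|C|) by that of h(\<xi>), which is the claimed tail.\<close>

section \<open>Cycles and orbits\<close>

lemma funpow_in_invariant:
  assumes "q ` S \<subseteq> S" "x \<in> S"
  shows "(q ^^ j) x \<in> S"
  using assms by (induction j) auto

lemma funpow_eq_on_invariant:
  assumes "\<forall>y\<in>S. p y = q y" "q ` S \<subseteq> S" "x \<in> S"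
  shows "(p ^^ j) x = (q ^^ j) x"
  using assms funpow_in_invariant[OF assms(2,3)] by (induction j) auto

lemma cycle_of_cong:
  assumes "\<forall>y\<in>S. p y = q y" "q ` S \<subseteq> S" "x \<in> S"
  shows "cycle_of p x = cycle_of q x"
  unfolding cycle_of_def using funpow_eq_on_invariant[OF assms] by simp

lemma cycle_of_self: "x \<in> cycle_of \<pi> x"
  unfolding cycle_of_def by (auto intro: exI[of _ 0])

lemma cycle_of_subset_invariant:
  assumes "\<pi> ` S \<subseteq> S" "x \<in> S"
  shows "cycle_of \<pi> x \<subseteq> S"
  unfolding cycle_of_def using funpow_in_invariant[OF assms] by blast

lemma cycle_of_subset: "\<pi> permutes U \<Longrightarrow> x \<in> U \<Longrightarrow> cycle_of \<pi> x \<subseteq> U"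
  by (simp add: cycle_of_subset_invariant permutes_image)

lemma image_cycle_of_subset: "\<pi> ` cycle_of \<pi> x \<subseteq> cycle_of \<pi> x"
  unfolding cycle_of_def by (auto intro: exI[of _ "Suc _"])

lemma image_cycle_of:
  assumes "\<pi> permutes U" "finite U" "x \<in> U"
  shows "\<pi> ` cycle_of \<pi> x = cycle_of \<pi> x"
proof (rule endo_inj_surj)
  show "finite (cycle_of \<pi> x)"
    using cycle_of_subset[OF assms(1,3)] assms(2) finite_subset by blast
  show "inj_on \<pi> (cycle_of \<pi> x)"
    using permutes_inj[OF assms(1)] inj_on_subset by blast
qed (rule image_cycle_of_subset)

lemma Or_eq_UN_cycle_of: "Or \<pi> A = (\<Union>a\<in>A. cycle_of \<pi> a)"
  unfolding Or_def cycle_of_def by auto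

lemma Or_subset_invariant:
  assumes "q ` S \<subseteq> S" "B \<subseteq> S"
  shows "Or q B \<subseteq> S"
  unfolding Or_eq_UN_cycle_of using assms(2)
  by (intro UN_least cycle_of_subset_invariant[OF assms(1)]) blast

lemma Or_cong:
  assumes "\<forall>y\<in>S. p y = q y" "q ` S \<subseteq> S" "B \<subseteq> S"
  shows "Or p B = Or q B"
  unfolding Or_eq_UN_cycle_of using assms(3)
  by (intro SUP_cong refl cycle_of_cong[OF assms(1,2)]) blast

lemma Or_split_cycle:
  assumes "x \<in> A" "\<pi> ` C \<subseteq> C" "C = cycle_of \<pi> x"
  shows "Or \<pi> A = C \<union> Or \<pi> (A - C)"
proof -
  have "cycle_of \<pi> a \<subseteq> C" if "a \<in> A \<inter> C" for a
    using cycle_of_subset_invariant[OF assms(2)] that by blast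
  then have "Or \<pi> (A \<inter> C) \<subseteq> C"
    unfolding Or_eq_UN_cycle_of by blast
  moreover have "C \<subseteq> Or \<pi> (A \<inter> C)"
    unfolding Or_eq_UN_cycle_of using assms(1,3) cycle_of_self[of x \<pi>] by blast
  moreover have "Or \<pi> A = Or \<pi> (A \<inter> C) \<union> Or \<pi> (A - C)"
    unfolding Or_eq_UN_cycle_of by blast
  ultimately show ?thesis by blast
qed

section \<open>Restricting and gluing permutations\<close>

definition perm_restrict :: "'a set \<Rightarrow> ('a \<Rightarrow> 'a) \<Rightarrow> 'a \<Rightarrow> 'a" where
  "perm_restrict S \<pi> = (\<lambda>y. if y \<in> S then \<pi> y else y)"

lemma perm_restrict_permutes:
  assumes "\<pi> permutes U" "\<pi> ` S = S"
  shows "perm_restrict S \<pi> permutes S"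
proof (rule bij_imp_permutes)
  have "bij_betw \<pi> S S"
    using assms inj_on_subset[OF permutes_inj[OF assms(1)]] by (simp add: bij_betw_def)
  then show "bij_betw (perm_restrict S \<pi>) S S"
    by (rule bij_betw_cong[THEN iffD1, rotated]) (simp add: perm_restrict_def)
qed (simp add: perm_restrict_def)

lemma perm_restrict_adm_perms:
  assumes "\<pi> \<in> adm_perms E U" "S \<subseteq> U" "\<pi> ` S = S"
  shows "perm_restrict S \<pi> \<in> adm_perms E S"
  using assms perm_restrict_permutes[of \<pi> U S]
  unfolding adm_perms_def by (auto simp: perm_restrict_def)

lemma perm_restrict_comp_complement:
  assumes "\<pi> permutes U" "\<pi> ` C = C"
  shows "perm_restrict C \<pi> \<circ> perm_restrict (U - C) \<pi> = \<pi>"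
proof
  fix y
  have "\<pi> y \<notin> C" if "y \<notin> C"
    using that assms(2) permutes_inj[OF assms(1)] by (metis inj_image_mem_iff)
  then show "(perm_restrict C \<pi> \<circ> perm_restrict (U - C) \<pi>) y = \<pi> y"
    using assms(1) by (auto simp: perm_restrict_def permutes_not_in)
qed

lemma comp_permutes_disjoint:
  assumes "\<sigma> permutes C" "\<rho> permutes D" "C \<inter> D = {}"
  shows "(\<sigma> \<circ> \<rho>) y = (if y \<in> C then \<sigma> y else \<rho> y)"
proof (cases "y \<in> D")
  case True
  then have "\<rho> y \<in> D" using assms(2) by (simp add: permutes_in_image)
  then have "\<rho> y \<notin> C" using assms(3) by blast
  then show ?thesis using True assms by (auto simp: permutes_not_in)
qed (use assms in \<open>auto simp: permutes_not_in\<close>)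

lemma perm_restrict_comp_left:
  assumes "\<sigma> permutes C" "\<rho> permutes D" "C \<inter> D = {}"
  shows "perm_restrict C (\<sigma> \<circ> \<rho>) = \<sigma>"
  using assms comp_permutes_disjoint[OF assms]
  by (auto simp: perm_restrict_def fun_eq_iff permutes_not_in)

lemma perm_restrict_comp_right:
  assumes "\<sigma> permutes C" "\<rho> permutes D" "C \<inter> D = {}"
  shows "perm_restrict D (\<sigma> \<circ> \<rho>) = \<rho>"
  using assms comp_permutes_disjoint[OF assms]
  by (auto simp: perm_restrict_def fun_eq_iff permutes_not_in)

lemma comp_adm_perms:
  assumes \<sigma>: "\<sigma> \<in> adm_perms E C" and \<rho>: "\<rho> \<in> adm_perms E D" and disj: "C \<inter> D = {}"
  shows "\<sigma> \<circ> \<rho> \<in> adm_perms E (C \<union> D)"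
proof -
  have perm: "\<sigma> permutes C" "\<rho> permutes D"
    using \<sigma> \<rho> by (auto simp: adm_perms_def)
  then have "\<sigma> \<circ> \<rho> permutes C \<union> D"
    by (auto intro: permutes_compose permutes_subset)
  then show ?thesis
    using \<sigma> \<rho> comp_permutes_disjoint[OF perm disj] unfolding adm_perms_def by auto
qed

lemma perm_weight_comp:
  assumes perm: "\<sigma> permutes C" "\<rho> permutes D" and disj: "C \<inter> D = {}"
    and fin: "finite C" "finite D"
  shows "perm_weight \<alpha> (C \<union> D) (\<sigma> \<circ> \<rho>) = perm_weight \<alpha> C \<sigma> * perm_weight \<alpha> D \<rho>"
proof -
  have "{y \<in> C \<union> D. (\<sigma> \<circ> \<rho>) y \<noteq> y} = {y \<in> C. \<sigma> y \<noteq> y} \<union> {y \<in> D. \<rho> y \<noteq> y}"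
    using comp_permutes_disjoint[OF perm disj] disj by auto
  moreover have "card ({y \<in> C. \<sigma> y \<noteq> y} \<union> {y \<in> D. \<rho> y \<noteq> y})
      = card {y \<in> C. \<sigma> y \<noteq> y} + card {y \<in> D. \<rho> y \<noteq> y}"
    using disj fin by (intro card_Un_disjoint) auto
  ultimately show ?thesis
    unfolding perm_weight_def by (simp add: algebra_simps exp_add[symmetric])
qed

section \<open>Conditioning on the cycle of a point\<close>

lemma finite_adm_perms: "finite U \<Longrightarrow> finite (adm_perms E U)"
  unfolding adm_perms_def by (rule finite_subset[OF _ finite_permutations[of U]]) auto

lemma id_in_adm_perms: "id \<in> adm_perms E U"
  by (simp add: adm_perms_def)

lemma perm_weight_pos: "perm_weight \<alpha> U \<pi> > 0"
  unfolding perm_weight_def by simp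

lemma part_fun_pos: "finite U \<Longrightarrow> part_fun \<alpha> E U > 0"
  unfolding part_fun_def
  by (rule sum_pos2[OF finite_adm_perms id_in_adm_perms]) (auto simp: perm_weight_pos less_imp_le)

lemma sum_event_eq_part_fun_mult_perm_prob:
  "finite U \<Longrightarrow> (\<Sum>\<pi>\<in>{\<pi>\<in>adm_perms E U. Q \<pi>}. perm_weight \<alpha> U \<pi>) = part_fun \<alpha> E U * perm_prob \<alpha> E U Q"
  using part_fun_pos[of U \<alpha> E] by (simp add: perm_prob_def)

lemma perm_prob_Or_empty:
  "finite U \<Longrightarrow> perm_prob \<alpha> E U (\<lambda>\<pi>. l \<le> card (Or \<pi> {})) = (if l = 0 then 1 else 0)"
  using part_fun_pos[of U \<alpha> E] by (simp add: Or_def perm_prob_def part_fun_def)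

lemma perm_prob_eq_1:
  assumes "finite U" "\<And>\<pi>. \<pi> \<in> adm_perms E U \<Longrightarrow> Q \<pi>"
  shows "perm_prob \<alpha> E U Q = 1"
proof -
  have "{\<pi>\<in>adm_perms E U. Q \<pi>} = adm_perms E U"
    using assms(2) by blast
  moreover have "part_fun \<alpha> E U \<noteq> 0"
    using part_fun_pos[OF assms(1)] by (metis less_irrefl)
  ultimately show ?thesis
    by (simp add: perm_prob_def part_fun_def[symmetric])
qed

lemma image_complement_of_invariant:
  assumes "\<pi> permutes U" "\<pi> ` C = C"
  shows "\<pi> ` (U - C) = U - C"
  using assms permutes_image[OF assms(1)] permutes_inj[OF assms(1)] by (metis image_set_diff)

lemma bij_betw_comp_fixed_cycle:
  assumes fin: "finite U" and CU: "C \<subseteq> U"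
  shows "bij_betw (\<lambda>(\<sigma>, \<rho>). \<sigma> \<circ> \<rho>)
    ({\<sigma>\<in>adm_perms E C. cycle_of \<sigma> x = C} \<times> adm_perms E (U - C))
    {\<pi>\<in>adm_perms E U. cycle_of \<pi> x = C}"
proof -
  define T where "T = {\<sigma>\<in>adm_perms E C. cycle_of \<sigma> x = C}"
  define R where "R = adm_perms E (U - C)"
  define SC where "SC = {\<pi>\<in>adm_perms E U. cycle_of \<pi> x = C}"
  have disj: "C \<inter> (U - C) = {}" and U: "C \<union> (U - C) = U"
    using CU by auto
  have glue: "\<sigma> \<circ> \<rho> \<in> SC \<and> perm_restrict C (\<sigma> \<circ> \<rho>) = \<sigma> \<and> perm_restrict (U - C) (\<sigma> \<circ> \<rho>) = \<rho>"
    if "\<sigma> \<in> T" "\<rho> \<in> R" for \<sigma> \<rho>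
  proof -
    have perm: "\<sigma> permutes C" "\<rho> permutes U - C"
      using that by (auto simp: T_def R_def adm_perms_def)
    have "cycle_of (\<sigma> \<circ> \<rho>) x = cycle_of \<sigma> x"
      using that cycle_of_self[of x \<sigma>] comp_permutes_disjoint[OF perm disj]
      by (intro cycle_of_cong[where S = C]) (auto simp: T_def permutes_image[OF perm(1)])
    then show ?thesis
      using comp_adm_perms[of \<sigma> E C \<rho> "U - C"] that disj U
        perm_restrict_comp_left[OF perm disj] perm_restrict_comp_right[OF perm disj]
      by (auto simp: T_def R_def SC_def)
  qed
  have split: "perm_restrict C \<pi> \<in> T \<and> perm_restrict (U - C) \<pi> \<in> R
      \<and> perm_restrict C \<pi> \<circ> perm_restrict (U - C) \<pi> = \<pi>" if "\<pi> \<in> SC" for \<pi>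
  proof -
    have adm: "\<pi> \<in> adm_perms E U" and cyc: "cycle_of \<pi> x = C"
      using that by (auto simp: SC_def)
    have perm: "\<pi> permutes U"
      using adm by (simp add: adm_perms_def)
    have xC: "x \<in> C"
      using cyc cycle_of_self by metis
    have inv: "\<pi> ` C = C"
      using image_cycle_of[OF perm fin] xC CU cyc by auto
    have "cycle_of (perm_restrict C \<pi>) x = C"
      using cyc xC inv by (subst cycle_of_cong[where S = C]) (auto simp: perm_restrict_def)
    then show ?thesis
      using perm_restrict_adm_perms[OF adm CU inv]
        perm_restrict_adm_perms[OF adm _ image_complement_of_invariant[OF perm inv]]
        perm_restrict_comp_complement[OF perm inv]
      by (auto simp: T_def R_def)
  qed
  show ?thesis
    unfolding T_def[symmetric] R_def[symmetric] SC_def[symmetric]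
    by (rule bij_betw_byWitness[where f' = "\<lambda>\<pi>. (perm_restrict C \<pi>, perm_restrict (U - C) \<pi>)"])
      (use glue split in auto)
qed

lemma sum_fixed_cycle_factor:
  assumes fin: "finite U" and CU: "C \<subseteq> U"
  shows "(\<Sum>\<pi>\<in>{\<pi>\<in>adm_perms E U. cycle_of \<pi> x = C}. perm_weight \<alpha> U \<pi> * G (perm_restrict (U - C) \<pi>))
       = (\<Sum>\<sigma>\<in>{\<sigma>\<in>adm_perms E C. cycle_of \<sigma> x = C}. perm_weight \<alpha> C \<sigma>)
         * (\<Sum>\<rho>\<in>adm_perms E (U - C). perm_weight \<alpha> (U - C) \<rho> * G \<rho>)"
proof -
  define T where "T = {\<sigma>\<in>adm_perms E C. cycle_of \<sigma> x = C}"
  define R where "R = adm_perms E (U - C)"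
  have disj: "C \<inter> (U - C) = {}" and U: "C \<union> (U - C) = U"
    using CU by auto
  have "perm_weight \<alpha> U (\<sigma> \<circ> \<rho>) * G (perm_restrict (U - C) (\<sigma> \<circ> \<rho>))
      = perm_weight \<alpha> C \<sigma> * (perm_weight \<alpha> (U - C) \<rho> * G \<rho>)" if "\<sigma> \<in> T" "\<rho> \<in> R" for \<sigma> \<rho>
  proof -
    have perm: "\<sigma> permutes C" "\<rho> permutes U - C"
      using that by (auto simp: T_def R_def adm_perms_def)
    have "finite C"
      using fin CU by (rule finite_subset[rotated])
    then show ?thesis
      using perm_weight_comp[OF perm disj] perm_restrict_comp_right[OF perm disj] fin U by simp
  qed
  then have "(\<Sum>(\<sigma>, \<rho>)\<in>T \<times> R. perm_weight \<alpha> C \<sigma> * (perm_weight \<alpha> (U - C) \<rho> * G \<rho>))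
      = (\<Sum>(\<sigma>, \<rho>)\<in>T \<times> R. perm_weight \<alpha> U (\<sigma> \<circ> \<rho>) * G (perm_restrict (U - C) (\<sigma> \<circ> \<rho>)))"
    by (intro sum.cong) auto
  also have "\<dots> = (\<Sum>\<pi>\<in>{\<pi>\<in>adm_perms E U. cycle_of \<pi> x = C}. perm_weight \<alpha> U \<pi> * G (perm_restrict (U - C) \<pi>))"
    using sum.reindex_bij_betw[OF bij_betw_comp_fixed_cycle[OF fin CU],
        of "\<lambda>\<pi>. perm_weight \<alpha> U \<pi> * G (perm_restrict (U - C) \<pi>)" E x]
    by (simp add: case_prod_unfold T_def R_def)
  finally show ?thesis
    by (simp add: sum_product sum.cartesian_product T_def R_def)
qed

lemma card_Or_split_cycle:
  assumes perm: "\<pi> permutes U" and fin: "finite U" and xA: "x \<in> A" and AU: "A \<subseteq> U"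
    and C: "C = cycle_of \<pi> x"
  shows "card (Or \<pi> A) = card C + card (Or (perm_restrict (U - C) \<pi>) (A - C))"
proof -
  have inv: "\<pi> ` C = C"
    using image_cycle_of[OF perm fin] xA AU C by auto
  have inv': "\<pi> ` (U - C) \<subseteq> U - C"
    using image_complement_of_invariant[OF perm inv] by simp
  have rest: "Or \<pi> (A - C) = Or (perm_restrict (U - C) \<pi>) (A - C)"
    using AU inv' by (intro Or_cong[where S = "U - C"]) (auto simp: perm_restrict_def)
  have sub: "Or \<pi> (A - C) \<subseteq> U - C"
    using AU by (intro Or_subset_invariant[OF inv']) auto
  have "C \<subseteq> U"
    using C cycle_of_subset[OF perm subsetD[OF AU xA]] by simp
  then have "finite C"
    using fin by (rule finite_subset)
  moreover have "finite (Or \<pi> (A - C))"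
    using finite_subset[OF sub] fin by simp
  moreover have "C \<inter> Or \<pi> (A - C) = {}"
    using sub by blast
  ultimately have "card (C \<union> Or \<pi> (A - C)) = card C + card (Or \<pi> (A - C))"
    by (rule card_Un_disjoint)
  then show ?thesis
    using Or_split_cycle[OF xA _ C] inv rest by simp
qed

lemma sum_weight_Or_event_fixed_cycle:
  assumes fin: "finite U" and xA: "x \<in> A" and AU: "A \<subseteq> U" and CU: "C \<subseteq> U"
  shows "(\<Sum>\<pi>\<in>{\<pi>\<in>adm_perms E U. cycle_of \<pi> x = C \<and> l \<le> card (Or \<pi> A)}. perm_weight \<alpha> U \<pi>)
    = (\<Sum>\<pi>\<in>{\<pi>\<in>adm_perms E U. cycle_of \<pi> x = C}. perm_weight \<alpha> U \<pi>)
      * perm_prob \<alpha> E (U - C) (\<lambda>\<rho>. l - card C \<le> card (Or \<rho> (A - C)))"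
proof -
  define SC where "SC = {\<pi>\<in>adm_perms E U. cycle_of \<pi> x = C}"
  define WT where "WT = (\<Sum>\<sigma>\<in>{\<sigma>\<in>adm_perms E C. cycle_of \<sigma> x = C}. perm_weight \<alpha> C \<sigma>)"
  define Q where "Q = (\<lambda>\<rho>. l - card C \<le> card (Or \<rho> (A - C)))"
  define ind where "ind = (\<lambda>\<rho>. if Q \<rho> then 1 else 0 :: real)"
  have finSC: "finite SC"
    unfolding SC_def using finite_adm_perms[OF fin] by simp
  have "(\<Sum>\<pi>\<in>{\<pi>\<in>adm_perms E U. cycle_of \<pi> x = C \<and> l \<le> card (Or \<pi> A)}. perm_weight \<alpha> U \<pi>)
      = (\<Sum>\<pi>\<in>SC. perm_weight \<alpha> U \<pi> * ind (perm_restrict (U - C) \<pi>))"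
  proof -
    have "l \<le> card (Or \<pi> A) \<longleftrightarrow> Q (perm_restrict (U - C) \<pi>)" if "\<pi> \<in> SC" for \<pi>
      using that card_Or_split_cycle[OF _ fin xA AU] by (auto simp: SC_def adm_perms_def Q_def)
    then have "{\<pi>\<in>adm_perms E U. cycle_of \<pi> x = C \<and> l \<le> card (Or \<pi> A)}
        = {\<pi>\<in>SC. Q (perm_restrict (U - C) \<pi>)}"
      by (auto simp: SC_def)
    then show ?thesis
      by (auto simp: sum.inter_filter[OF finSC] ind_def intro!: sum.cong)
  qed
  also have "\<dots> = WT * (\<Sum>\<rho>\<in>adm_perms E (U - C). perm_weight \<alpha> (U - C) \<rho> * ind \<rho>)"
    unfolding SC_def WT_def by (rule sum_fixed_cycle_factor[OF fin CU])
  also have "\<dots> = WT * part_fun \<alpha> E (U - C) * perm_prob \<alpha> E (U - C) Q"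
    using fin by (simp add: sum_event_eq_part_fun_mult_perm_prob[symmetric] sum.inter_filter
        finite_adm_perms ind_def if_distrib cong: if_cong)
  also have "WT * part_fun \<alpha> E (U - C) = (\<Sum>\<pi>\<in>SC. perm_weight \<alpha> U \<pi>)"
    using sum_fixed_cycle_factor[OF fin CU, where G = "\<lambda>_. 1"]
    by (simp add: SC_def WT_def part_fun_def)
  finally show ?thesis
    by (simp add: SC_def Q_def)
qed

lemma sum_weight_Or_event_le_cycle_sum:
  fixes g :: "nat \<Rightarrow> real"
  assumes fin: "finite U" and xA: "x \<in> A" and AU: "A \<subseteq> U"
    and bound: "\<And>C l'. x \<in> C \<Longrightarrow> C \<subseteq> U \<Longrightarrow>
      perm_prob \<alpha> E (U - C) (\<lambda>\<rho>. l' \<le> card (Or \<rho> (A - C))) \<le> g l'"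
  shows "(\<Sum>\<pi>\<in>{\<pi>\<in>adm_perms E U. l \<le> card (Or \<pi> A)}. perm_weight \<alpha> U \<pi>)
    \<le> (\<Sum>\<pi>\<in>adm_perms E U. perm_weight \<alpha> U \<pi> * g (l - card (cycle_of \<pi> x)))"
proof -
  define w where "w = perm_weight \<alpha> U"
  define SC where "SC = (\<lambda>C. {\<pi>\<in>adm_perms E U. cycle_of \<pi> x = C})"
  have finA: "finite (adm_perms E U)"
    using fin by (rule finite_adm_perms)
  have img: "(\<lambda>\<pi>. cycle_of \<pi> x) ` adm_perms E U \<subseteq> Pow U"
    using cycle_of_subset[OF _ subsetD[OF AU xA]] by (auto simp: adm_perms_def)
  have per_cycle: "(\<Sum>\<pi>\<in>{\<pi>\<in>adm_perms E U. cycle_of \<pi> x = C \<and> l \<le> card (Or \<pi> A)}. w \<pi>)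
      \<le> (\<Sum>\<pi>\<in>SC C. w \<pi> * g (l - card (cycle_of \<pi> x)))" if CU: "C \<subseteq> U" for C
  proof (cases "x \<in> C")
    case False
    then have "cycle_of \<pi> x \<noteq> C" for \<pi>
      using cycle_of_self[of x \<pi>] by blast
    then show ?thesis
      by (simp add: SC_def)
  next
    case True
    have "(\<Sum>\<pi>\<in>{\<pi>\<in>adm_perms E U. cycle_of \<pi> x = C \<and> l \<le> card (Or \<pi> A)}. w \<pi>)
        \<le> (\<Sum>\<pi>\<in>SC C. w \<pi>) * g (l - card C)"
      unfolding w_def SC_def sum_weight_Or_event_fixed_cycle[OF fin xA AU CU]
      using bound[OF True CU] by (intro mult_left_mono sum_nonneg) (auto simp: perm_weight_pos less_imp_le)
    then show ?thesis
      by (simp add: sum_distrib_right SC_def)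
  qed
  have "(\<Sum>\<pi>\<in>{\<pi>\<in>adm_perms E U. l \<le> card (Or \<pi> A)}. w \<pi>)
      = (\<Sum>C\<in>Pow U. \<Sum>\<pi>\<in>{\<pi>\<in>adm_perms E U. cycle_of \<pi> x = C \<and> l \<le> card (Or \<pi> A)}. w \<pi>)"
  proof -
    have "(\<Sum>\<pi>\<in>{\<pi>\<in>adm_perms E U. l \<le> card (Or \<pi> A)}. w \<pi>)
        = (\<Sum>C\<in>Pow U. \<Sum>\<pi>\<in>{\<pi>\<in>{\<pi>\<in>adm_perms E U. l \<le> card (Or \<pi> A)}. cycle_of \<pi> x = C}. w \<pi>)"
      by (rule sum.group[symmetric]) (use finA img fin in auto)
    then show ?thesis
      by (simp add: conj_commute conj_left_commute)
  qed
  also have "\<dots> \<le> (\<Sum>C\<in>Pow U. \<Sum>\<pi>\<in>SC C. w \<pi> * g (l - card (cycle_of \<pi> x)))"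
    by (rule sum_mono) (use per_cycle in blast)
  also have "\<dots> = (\<Sum>\<pi>\<in>adm_perms E U. w \<pi> * g (l - card (cycle_of \<pi> x)))"
    unfolding SC_def by (rule sum.group[OF finA _ img]) (use fin in auto)
  finally show ?thesis
    by (simp add: w_def)
qed

section \<open>Layer-cake formulas\<close>

lemma telescope_lessThan_min:
  fixes h :: "nat \<Rightarrow> 'b::ab_group_add"
  shows "h (min c l) = h 0 + (\<Sum>i<l. if i < c then h (Suc i) - h i else 0)"
proof -
  have "(\<Sum>i<l. if i < c then h (Suc i) - h i else 0) = (\<Sum>i\<in>{i\<in>{..<l}. i < c}. h (Suc i) - h i)"
    by (subst sum.inter_filter) auto
  also have "{i\<in>{..<l}. i < c} = {..<min c l}"
    by auto
  finally show ?thesis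
    by (simp add: sum_lessThan_telescope)
qed

lemma sum_layer_cake:
  fixes w :: "'b \<Rightarrow> real" and X :: "'b \<Rightarrow> nat" and h :: "nat \<Rightarrow> real"
  assumes "finite S" and const: "\<And>c. h (min c l) = h c"
  shows "(\<Sum>s\<in>S. w s * h (X s))
    = (\<Sum>s\<in>S. w s) * h 0 + (\<Sum>i<l. (h (Suc i) - h i) * (\<Sum>s\<in>{s\<in>S. i < X s}. w s))"
proof -
  have "(\<Sum>s\<in>S. w s * h (X s))
      = (\<Sum>s\<in>S. w s * h 0 + (\<Sum>i<l. (h (Suc i) - h i) * (if i < X s then w s else 0)))"
    by (intro sum.cong refl)
      (simp add: telescope_lessThan_min[of h "X _" l, unfolded const] ring_distribs sum_distrib_left
        if_distrib mult.commute cong: if_cong)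
  also have "\<dots> = (\<Sum>s\<in>S. w s) * h 0 + (\<Sum>i<l. (h (Suc i) - h i) * (\<Sum>s\<in>S. if i < X s then w s else 0))"
    by (simp add: sum.distrib sum_distrib_left sum_distrib_right sum.swap[of _ S])
  finally show ?thesis
    using assms(1) by (simp add: sum.inter_filter)
qed

lemma expectation_layer_cake:
  fixes M :: "int pmf" and h :: "nat \<Rightarrow> real"
  assumes nonneg: "set_pmf M \<subseteq> {0..}" and const: "\<And>c. h (min c l) = h c"
  shows "measure_pmf.expectation M (\<lambda>a. h (nat a))
    = h 0 + (\<Sum>i<l. (h (Suc i) - h i) * measure_pmf.prob M {k. int (Suc i) \<le> k})"
proof -
  define f where "f = (\<lambda>i a. (h (Suc i) - h i) * indicator {k. int (Suc i) \<le> k} a :: real)"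
  have integrable: "integrable (measure_pmf M) (f i)" for i
    unfolding f_def
    by (intro integrable_mult_right integrable_real_indicator) (auto simp: measure_pmf.emeasure_eq_measure)
  have "h (nat a) = h 0 + (\<Sum>i<l. f i a)" if "a \<in> set_pmf M" for a
  proof -
    have "f i a = (if i < nat a then h (Suc i) - h i else 0)" for i
      using that nonneg by (auto simp: f_def indicator_def)
    then show ?thesis
      using telescope_lessThan_min[of h "nat a" l] const by simp
  qed
  then have "measure_pmf.expectation M (\<lambda>a. h (nat a))
      = measure_pmf.expectation M (\<lambda>a. h 0 + (\<Sum>i<l. f i a))"
    by (intro integral_cong_AE) (auto intro: AE_pmfI)
  also have "\<dots> = h 0 + (\<Sum>i<l. measure_pmf.expectation M (f i))"
    using integrable by (simp add: Bochner_Integration.integral_add Bochner_Integration.integral_sum)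
  finally show ?thesis
    by (simp add: f_def)
qed

section \<open>Tails of sums of independent copies\<close>

lemma prob_bind_pmf:
  "measure_pmf.prob (bind_pmf M N) X = measure_pmf.expectation M (\<lambda>x. measure_pmf.prob (N x) X)"
proof -
  have integrable: "integrable (measure_pmf M) (\<lambda>x. measure_pmf.prob (N x) X)"
    by (rule measure_pmf.integrable_const_bound[where B = 1]) auto
  have "ennreal (measure_pmf.prob (bind_pmf M N) X) = (\<integral>\<^sup>+x. ennreal (measure_pmf.prob (N x) X) \<partial>M)"
    by (simp add: measure_pmf.emeasure_eq_measure[symmetric])
  also have "\<dots> = ennreal (measure_pmf.expectation M (\<lambda>x. measure_pmf.prob (N x) X))"
    by (rule nn_integral_eq_integral[OF integrable]) auto
  finally show ?thesis
    by (simp add: integral_nonneg_AE)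
qed

definition iid_tail :: "int pmf \<Rightarrow> nat \<Rightarrow> int \<Rightarrow> real" where
  "iid_tail \<xi> n t = measure_pmf.prob (iid_sum \<xi> n) {k. t \<le> k}"

lemma iid_tail_antimono: "t \<le> t' \<Longrightarrow> iid_tail \<xi> n t' \<le> iid_tail \<xi> n t"
  unfolding iid_tail_def by (rule measure_pmf.finite_measure_mono) auto

lemma iid_tail_Suc: "iid_tail \<xi> (Suc n) t = measure_pmf.expectation \<xi> (\<lambda>a. iid_tail \<xi> n (t - a))"
  by (simp add: iid_tail_def prob_bind_pmf vimage_def algebra_simps)

lemma set_pmf_iid_sum_nonneg: "set_pmf \<xi> \<subseteq> {0..} \<Longrightarrow> set_pmf (iid_sum \<xi> n) \<subseteq> {0..}"
  by (induction n) force+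

lemma iid_tail_nonpos:
  assumes "set_pmf \<xi> \<subseteq> {0..}" "t \<le> 0"
  shows "iid_tail \<xi> n t = 1"
  unfolding iid_tail_def using set_pmf_iid_sum_nonneg[OF assms(1), of n] assms(2)
  by (subst measure_pmf.prob_eq_1) (auto intro!: AE_pmfI)

text \<open>For c > l the truncated difference l - c yields the tail at 0, which is 1 just like
  the tail at the negative threshold l - c, because the partial sums are nonnegative.\<close>

lemma iid_tail_Suc_layer_cake:
  fixes n l :: nat
  assumes "set_pmf \<xi> \<subseteq> {0..}"
  defines "h \<equiv> \<lambda>c. iid_tail \<xi> n (int (l - c))"
  shows "iid_tail \<xi> (Suc n) (int l)
    = h 0 + (\<Sum>i<l. (h (Suc i) - h i) * measure_pmf.prob \<xi> {k. int (Suc i) \<le> k})"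
proof -
  have "iid_tail \<xi> n (int l - a) = h (nat a)" if "a \<in> set_pmf \<xi>" for a
    using that assms(1) iid_tail_nonpos[OF assms(1)]
    by (cases "nat a \<le> l") (auto simp: h_def of_nat_diff)
  then have "iid_tail \<xi> (Suc n) (int l) = measure_pmf.expectation \<xi> (\<lambda>a. h (nat a))"
    unfolding iid_tail_Suc by (intro integral_cong_AE) (auto intro: AE_pmfI)
  also have "\<dots> = h 0 + (\<Sum>i<l. (h (Suc i) - h i) * measure_pmf.prob \<xi> {k. int (Suc i) \<le> k})"
    by (rule expectation_layer_cake[OF assms(1)]) (simp add: h_def min_def)
  finally show ?thesis .
qed

section \<open>Domination of orbit sizes\<close>

lemma sum_weight_cycle_tail_le:
  assumes finV: "finite V" and bounded: "cycle_length_bounded \<alpha> V E \<xi>"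
    and nonneg: "set_pmf \<xi> \<subseteq> {0..}" and UV: "U \<subseteq> V" and xU: "x \<in> U"
  shows "(\<Sum>\<pi>\<in>adm_perms E U. perm_weight \<alpha> U \<pi> * iid_tail \<xi> n (int (l - card (cycle_of \<pi> x))))
    \<le> part_fun \<alpha> E U * iid_tail \<xi> (Suc n) (int l)"
proof -
  define h where "h = (\<lambda>c. iid_tail \<xi> n (int (l - c)))"
  define p where "p = (\<lambda>i. measure_pmf.prob \<xi> {k. int (Suc i) \<le> k})"
  define Z where "Z = part_fun \<alpha> E U"
  have finU: "finite U"
    using finV UV finite_subset by blast
  have "Z > 0"
    unfolding Z_def using finU by (rule part_fun_pos)
  have tail: "(\<Sum>\<pi>\<in>{\<pi>\<in>adm_perms E U. i < card (cycle_of \<pi> x)}. perm_weight \<alpha> U \<pi>) \<le> Z * p i" for i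
  proof -
    have "perm_prob \<alpha> E U (\<lambda>\<pi>. Suc i \<le> card (cycle_of \<pi> x)) \<le> p i"
      using bounded UV finU xU unfolding cycle_length_bounded_def p_def
      by (auto dest!: spec[where x = "Suc i"])
    then show ?thesis
      using \<open>Z > 0\<close> sum_event_eq_part_fun_mult_perm_prob[OF finU]
      by (simp add: Z_def Suc_le_eq)
  qed
  have "h i \<le> h (Suc i)" for i
    unfolding h_def by (rule iid_tail_antimono) simp
  have "(\<Sum>\<pi>\<in>adm_perms E U. perm_weight \<alpha> U \<pi> * h (card (cycle_of \<pi> x)))
      = Z * h 0 + (\<Sum>i<l. (h (Suc i) - h i)
          * (\<Sum>\<pi>\<in>{\<pi>\<in>adm_perms E U. i < card (cycle_of \<pi> x)}. perm_weight \<alpha> U \<pi>))"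
    unfolding Z_def part_fun_def
    by (rule sum_layer_cake[OF finite_adm_perms[OF finU]]) (simp add: h_def min_def)
  also have "\<dots> \<le> Z * h 0 + (\<Sum>i<l. (h (Suc i) - h i) * (Z * p i))"
    using tail \<open>\<And>i. h i \<le> h (Suc i)\<close> by (intro add_left_mono sum_mono mult_left_mono) auto
  also have "\<dots> = Z * (h 0 + (\<Sum>i<l. (h (Suc i) - h i) * p i))"
    by (simp add: ring_distribs sum_distrib_left mult.left_commute)
  also have "\<dots> = Z * iid_tail \<xi> (Suc n) (int l)"
    unfolding h_def p_def by (subst iid_tail_Suc_layer_cake[OF nonneg]) (rule refl)
  finally show ?thesis
    by (simp add: h_def Z_def)
qed

lemma perm_prob_Or_empty_le_iid_tail:
  assumes "finite U" "set_pmf \<xi> \<subseteq> {0..}"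
  shows "perm_prob \<alpha> E U (\<lambda>\<pi>. l \<le> card (Or \<pi> {})) \<le> iid_tail \<xi> n (int l)"
proof (cases "l = 0")
  case True
  then show ?thesis
    using assms by (subst perm_prob_Or_empty) (simp_all add: iid_tail_nonpos)
next
  case False
  then show ?thesis
    using assms(1) by (subst perm_prob_Or_empty) (simp_all add: iid_tail_def)
qed

lemma perm_prob_card_Or_le_iid_tail:
  assumes finV: "finite V" and bounded: "cycle_length_bounded \<alpha> V E \<xi>"
    and nonneg: "set_pmf \<xi> \<subseteq> {0..}"
  shows "U \<subseteq> V \<Longrightarrow> A \<subseteq> U \<Longrightarrow> card A \<le> n \<Longrightarrow>
    perm_prob \<alpha> E U (\<lambda>\<pi>. l \<le> card (Or \<pi> A)) \<le> iid_tail \<xi> n (int l)"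
proof (induction n arbitrary: U A l)
  case 0
  then have "finite U" "A = {}"
    using finV finite_subset card_0_eq by (blast, metis le_zero_eq)
  then show ?case
    using perm_prob_Or_empty_le_iid_tail[OF _ nonneg] by blast
next
  case (Suc n)
  have finU: "finite U"
    using finV Suc.prems(1) finite_subset by blast
  show ?case
  proof (cases "A = {}")
    case True
    then show ?thesis
      using perm_prob_Or_empty_le_iid_tail[OF finU nonneg] by blast
  next
    case False
    then obtain x where xA: "x \<in> A" by blast
    have "perm_prob \<alpha> E (U - C) (\<lambda>\<rho>. l' \<le> card (Or \<rho> (A - C))) \<le> iid_tail \<xi> n (int l')"
      if "x \<in> C" "C \<subseteq> U" for C l'
    proof (rule Suc.IH)
      have "card (A - C) < card A"
        using xA that(1) finite_subset[OF Suc.prems(2) finU] by (intro psubset_card_mono) auto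
      then show "card (A - C) \<le> n"
        using Suc.prems(3) by simp
    qed (use Suc.prems in auto)
    then have "part_fun \<alpha> E U * perm_prob \<alpha> E U (\<lambda>\<pi>. l \<le> card (Or \<pi> A))
        \<le> (\<Sum>\<pi>\<in>adm_perms E U. perm_weight \<alpha> U \<pi> * iid_tail \<xi> n (int (l - card (cycle_of \<pi> x))))"
      unfolding sum_event_eq_part_fun_mult_perm_prob[OF finU, symmetric]
      using xA Suc.prems(2) by (intro sum_weight_Or_event_le_cycle_sum[OF finU]) auto
    also have "\<dots> \<le> part_fun \<alpha> E U * iid_tail \<xi> (Suc n) (int l)"
      using xA Suc.prems(1,2) by (intro sum_weight_cycle_tail_le[OF finV bounded nonneg]) auto
    finally show ?thesis
      using part_fun_pos[OF finU] by simp
  qed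
qed

text \<open>The cycle bound for U = {v} and l = 1 forces \<xi> \<ge> 1 almost surely.\<close>

lemma cycle_length_bounded_set_pmf:
  assumes bounded: "cycle_length_bounded \<alpha> V E \<xi>" and "v \<in> V"
  shows "set_pmf \<xi> \<subseteq> {1..}"
proof -
  have "1 \<le> card (cycle_of \<pi> v)" if "\<pi> \<in> adm_perms E {v}" for \<pi>
  proof -
    have "cycle_of \<pi> v \<subseteq> {v}"
      using that cycle_of_subset[of \<pi> "{v}" v] by (simp add: adm_perms_def)
    then have "finite (cycle_of \<pi> v)"
      by (rule finite_subset) simp
    then show ?thesis
      using cycle_of_self[of v \<pi>] by (auto simp: Suc_le_eq card_gt_0_iff)
  qed
  then have "perm_prob \<alpha> E {v} (\<lambda>\<pi>. 1 \<le> card (cycle_of \<pi> v)) = 1"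
    by (intro perm_prob_eq_1) auto
  moreover have "perm_prob \<alpha> E {v} (\<lambda>\<pi>. 1 \<le> card (cycle_of \<pi> v)) \<le> measure_pmf.prob \<xi> {k. int 1 \<le> k}"
    using bounded \<open>v \<in> V\<close> unfolding cycle_length_bounded_def by (auto dest!: spec[where x = "1::nat"])
  ultimately have "measure_pmf.prob \<xi> {k. 1 \<le> k} = 1"
    using measure_pmf.measure_ge_1_iff by force
  then have "AE k in measure_pmf \<xi>. k \<in> {k. 1 \<le> k}"
    by (rule measure_pmf.AE_prob_1)
  then show ?thesis
    by (auto simp: AE_measure_pmf_iff)
qed

theorem proposition4p7:
  fixes V :: "'a set" and E :: "'a set set" and \<alpha> :: real and \<xi> :: "int pmf"
    and A :: "'a set" and l :: nat
  assumes "finite V"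
    and "E \<subseteq> {{x, y} | x y. x \<in> V \<and> y \<in> V}"
    and "cycle_length_bounded \<alpha> V E \<xi>"
    and "A \<subseteq> V"
  shows "perm_prob \<alpha> E V (\<lambda>\<pi>. card (Or \<pi> A) \<ge> l)
           \<le> measure_pmf.prob (iid_sum \<xi> (card A)) {k. k \<ge> int l}"
proof (cases "A = {}")
  case True
  then show ?thesis
    using perm_prob_Or_empty[OF assms(1), of \<alpha> E l] by simp
next
  case False
  then obtain v where "v \<in> V"
    using assms(4) by blast
  then have "set_pmf \<xi> \<subseteq> {0..}"
    using cycle_length_bounded_set_pmf[OF assms(3)] by force
  from perm_prob_card_Or_le_iid_tail[OF assms(1,3) this order.refl assms(4) order.refl]
  show ?thesis
    by (simp add: iid_tail_def)
qed

end
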